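(* Let $R\subseteq T$ be an integral extension of rings. Suppose that for every maximal ideal $Q$ of $T$ there is a maximal subring $V$ of $T$, integrally closed in $T$, with $(V:T)=Q$. Then for every maximal ideal $P$ of $R$ there is a maximal subring $W$ of $R$, integrally closed in $R$, with $(W:R)=P$.
   Context: All rings are commutative with $1\neq0$ and subrings are unital. A maximal subring of a ring $A$ is a proper subring maximal with respect to inclusion among proper subrings. The conductor of $S\subseteq A$ is $(S:A)=\{x\in A\mid Ax\subseteq S\}$. *)

theory Defs
  imports Main
begin

text \<open>Rings are subsets of an ambient commutative ring type (with 0 \<noteq> 1);
a ring here is a (unital) subring of the ambient type.\<close>

definition is_subring :: "'a::comm_ring_1 set \<Rightarrow> bool" where
  "is_subring S \<longleftrightarrow> 1 \<in> S \<and> (\<forall>x\<in>S. \<forall>y\<in>S. x + y \<in> S \<and> x * y \<in> S) \<and> (\<forall>x\<in>S. - x \<in> S)"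

definition maximal_subring :: "'a::comm_ring_1 set \<Rightarrow> 'a set \<Rightarrow> bool" where
  "maximal_subring W A \<longleftrightarrow> is_subring W \<and> W \<subset> A \<and>
     (\<forall>S. is_subring S \<and> W \<subseteq> S \<and> S \<subset> A \<longrightarrow> S = W)"

definition integral_over :: "'a::comm_ring_1 set \<Rightarrow> 'a \<Rightarrow> bool" where
  "integral_over S x \<longleftrightarrow>
     (\<exists>n::nat. \<exists>c::nat \<Rightarrow> 'a. (\<forall>i<n. c i \<in> S) \<and> x ^ n + (\<Sum>i<n. c i * x ^ i) = 0)"

definition integrally_closed_in :: "'a::comm_ring_1 set \<Rightarrow> 'a set \<Rightarrow> bool" where
  "integrally_closed_in W A \<longleftrightarrow> (\<forall>x\<in>A. integral_over W x \<longrightarrow> x \<in> W)"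

definition integral_extension :: "'a::comm_ring_1 set \<Rightarrow> 'a set \<Rightarrow> bool" where
  "integral_extension R T \<longleftrightarrow> is_subring R \<and> is_subring T \<and> R \<subseteq> T \<and> (\<forall>x\<in>T. integral_over R x)"

definition conductor :: "'a::comm_ring_1 set \<Rightarrow> 'a set \<Rightarrow> 'a set" where
  "conductor S A = {x \<in> A. \<forall>a\<in>A. a * x \<in> S}"

definition ideal_in :: "'a::comm_ring_1 set \<Rightarrow> 'a set \<Rightarrow> bool" where
  "ideal_in I A \<longleftrightarrow> I \<subseteq> A \<and> 0 \<in> I \<and> (\<forall>x\<in>I. \<forall>y\<in>I. x + y \<in> I) \<and>
     (\<forall>a\<in>A. \<forall>x\<in>I. a * x \<in> I)"

definition maximal_ideal_in :: "'a::comm_ring_1 set \<Rightarrow> 'a set \<Rightarrow> bool" where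
  "maximal_ideal_in P A \<longleftrightarrow> ideal_in P A \<and> P \<noteq> A \<and>
     (\<forall>J. ideal_in J A \<and> P \<subseteq> J \<longrightarrow> J = P \<or> J = A)"

end

theory Submission
  imports Defs "HOL-Computational_Algebra.Polynomial"
begin

text \<open>Since \<open>T\<close> is integral over \<open>R\<close>, some maximal ideal \<open>Q\<close> of \<open>T\<close> lies over \<open>P\<close>; for the
  corresponding \<open>V\<close> we get \<open>P \<subseteq> Q = (V:T) \<subseteq> V\<close>, and \<open>W = V \<inter> R\<close> is the required subring.
  Maximality and integral closedness make \<open>V\<close> behave like a valuation ring inside \<open>T\<close>: if
  \<open>x \<notin> V\<close> and \<open>x y \<in> V\<close> then \<open>y \<in> V\<close>, and if moreover \<open>y \<in> V\<close> then every element of \<open>T\<close>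
  is multiplied into \<open>V\<close> by a power of \<open>y\<close>. For \<open>s \<in> R - W\<close> write \<open>1 = p + s u\<close> with
  \<open>p \<in> P\<close>, \<open>u \<in> R\<close>; then \<open>u \<in> V\<close>, and for \<open>r \<in> R\<close> with \<open>r u\<^sup>m \<in> V\<close> the decomposition
  \<open>r = (r u\<^sup>m) s\<^sup>m + r (1 - (s u)\<^sup>m)\<close> puts \<open>r\<close> into \<open>W[s]\<close>, so \<open>W\<close> is maximal.
  Finally \<open>(W:R)\<close> is a proper ideal of \<open>R\<close> containing \<open>P\<close>, hence equal to \<open>P\<close>.\<close>

lemma subring_zero: "is_subring S \<Longrightarrow> 0 \<in> S"
  unfolding is_subring_def by (metis add.right_inverse)

lemma subring_one: "is_subring S \<Longrightarrow> 1 \<in> S"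
  unfolding is_subring_def by blast

lemma subring_add: "is_subring S \<Longrightarrow> x \<in> S \<Longrightarrow> y \<in> S \<Longrightarrow> x + y \<in> S"
  unfolding is_subring_def by blast

lemma subring_mult: "is_subring S \<Longrightarrow> x \<in> S \<Longrightarrow> y \<in> S \<Longrightarrow> x * y \<in> S"
  unfolding is_subring_def by blast

lemma subring_uminus: "is_subring S \<Longrightarrow> x \<in> S \<Longrightarrow> - x \<in> S"
  unfolding is_subring_def by blast

lemma subring_diff: "is_subring S \<Longrightarrow> x \<in> S \<Longrightarrow> y \<in> S \<Longrightarrow> x - y \<in> S"
  by (metis diff_conv_add_uminus subring_add subring_uminus)

lemma subring_power: "is_subring S \<Longrightarrow> x \<in> S \<Longrightarrow> x ^ n \<in> S"
  by (induction n) (auto intro: subring_one subring_mult)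

lemma subring_sum: "is_subring S \<Longrightarrow> (\<And>i. i \<in> I \<Longrightarrow> f i \<in> S) \<Longrightarrow> sum f I \<in> S"
  by (induction I rule: infinite_finite_induct) (auto intro: subring_zero subring_add)

lemma subring_Int: "is_subring S \<Longrightarrow> is_subring S' \<Longrightarrow> is_subring (S \<inter> S')"
  unfolding is_subring_def by auto

lemma ideal_in_subset: "ideal_in I A \<Longrightarrow> I \<subseteq> A"
  unfolding ideal_in_def by blast

lemma ideal_in_zero: "ideal_in I A \<Longrightarrow> 0 \<in> I"
  unfolding ideal_in_def by blast

lemma ideal_in_add: "ideal_in I A \<Longrightarrow> x \<in> I \<Longrightarrow> y \<in> I \<Longrightarrow> x + y \<in> I"
  unfolding ideal_in_def by blast

lemma ideal_in_mult_left: "ideal_in I A \<Longrightarrow> a \<in> A \<Longrightarrow> x \<in> I \<Longrightarrow> a * x \<in> I"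
  unfolding ideal_in_def by blast

lemma ideal_in_mult_right: "ideal_in I A \<Longrightarrow> a \<in> A \<Longrightarrow> x \<in> I \<Longrightarrow> x * a \<in> I"
  unfolding ideal_in_def by (metis mult.commute)

lemma ideal_in_diff: "ideal_in I A \<Longrightarrow> is_subring A \<Longrightarrow> x \<in> I \<Longrightarrow> y \<in> I \<Longrightarrow> x - y \<in> I"
  by (metis diff_conv_add_uminus ideal_in_add ideal_in_mult_left mult_minus1 subring_one
      subring_uminus)

lemma ideal_in_sum: "ideal_in I A \<Longrightarrow> (\<And>i. i \<in> S \<Longrightarrow> f i \<in> I) \<Longrightarrow> sum f S \<in> I"
  by (induction S rule: infinite_finite_induct) (auto intro: ideal_in_zero ideal_in_add)

lemma ideal_in_eq_if_one: "ideal_in I A \<Longrightarrow> 1 \<in> I \<Longrightarrow> I = A"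
  unfolding ideal_in_def by (metis mult.right_neutral subsetI subset_antisym)

lemma ideal_in_add_principal:
  assumes I: "ideal_in I A" and A: "is_subring A" and c: "c \<in> A"
  shows "ideal_in {x + c * a | x a. x \<in> I \<and> a \<in> A} A"
  unfolding ideal_in_def
proof (intro conjI ballI)
  show "{x + c * a | x a. x \<in> I \<and> a \<in> A} \<subseteq> A"
    using ideal_in_subset[OF I] A c by (auto intro!: subring_add subring_mult)
  show "0 \<in> {x + c * a | x a. x \<in> I \<and> a \<in> A}"
    using ideal_in_zero[OF I] subring_zero[OF A] by force
next
  fix y z assume "y \<in> {x + c * a | x a. x \<in> I \<and> a \<in> A}" "z \<in> {x + c * a | x a. x \<in> I \<and> a \<in> A}"
  then obtain x a x' a' where "y = x + c * a" "z = x' + c * a'" "x \<in> I" "a \<in> A" "x' \<in> I" "a' \<in> A"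
    by blast
  moreover have "y + z = (x + x') + c * (a + a')"
    by (simp add: algebra_simps \<open>y = x + c * a\<close> \<open>z = x' + c * a'\<close>)
  ultimately show "y + z \<in> {x + c * a | x a. x \<in> I \<and> a \<in> A}"
    using ideal_in_add[OF I] subring_add[OF A] by blast
next
  fix b y assume b: "b \<in> A" and "y \<in> {x + c * a | x a. x \<in> I \<and> a \<in> A}"
  then obtain x a where "y = x + c * a" "x \<in> I" "a \<in> A" by blast
  moreover have "b * y = b * x + c * (b * a)" by (simp add: algebra_simps \<open>y = x + c * a\<close>)
  ultimately show "b * y \<in> {x + c * a | x a. x \<in> I \<and> a \<in> A}"
    using ideal_in_mult_left[OF I b] subring_mult[OF A b] by blast
qed

lemma ideal_in_Union_chain:
  assumes "C \<noteq> {}" "subset.chain {J. ideal_in J A} C"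
  shows "ideal_in (\<Union>C) A"
proof -
  have ideals: "\<And>J. J \<in> C \<Longrightarrow> ideal_in J A"
    and chain: "\<And>X Y. X \<in> C \<Longrightarrow> Y \<in> C \<Longrightarrow> X \<subseteq> Y \<or> Y \<subseteq> X"
    using assms(2) unfolding subset_chain_def by auto
  show ?thesis
    unfolding ideal_in_def
  proof (intro conjI ballI)
    show "\<Union>C \<subseteq> A" "0 \<in> \<Union>C"
      using ideals assms(1) unfolding ideal_in_def by blast+
  next
    fix x y assume "x \<in> \<Union>C" "y \<in> \<Union>C"
    then obtain X Y where "X \<in> C" "Y \<in> C" "x \<in> X" "y \<in> Y" by blast
    then show "x + y \<in> \<Union>C"
      using chain[of X Y] ideals ideal_in_add by blast
  next
    fix a x assume "a \<in> A" "x \<in> \<Union>C"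
    then show "a * x \<in> \<Union>C" using ideals ideal_in_mult_left by blast
  qed
qed

lemma power_diff_in_ideal:
  assumes I: "ideal_in I A" and A: "is_subring A" and a: "a \<in> A" and b: "b \<in> A"
    and ab: "a - b \<in> I"
  shows "a ^ k - b ^ k \<in> I"
proof (induction k)
  case 0
  then show ?case using ideal_in_zero[OF I] by simp
next
  case (Suc k)
  have "a ^ Suc k - b ^ Suc k = a * (a ^ k - b ^ k) + b ^ k * (a - b)"
    by (simp add: algebra_simps)
  also have "\<dots> \<in> I"
    using Suc ab by (intro ideal_in_add[OF I] ideal_in_mult_left[OF I] a subring_power[OF A b])
  finally show ?case .
qed

lemma maximal_ideal_in_ideal: "maximal_ideal_in P A \<Longrightarrow> ideal_in P A"
  unfolding maximal_ideal_in_def by blast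

lemma maximal_ideal_in_one_notin: "maximal_ideal_in P A \<Longrightarrow> 1 \<notin> P"
  unfolding maximal_ideal_in_def using ideal_in_eq_if_one by blast

lemma maximal_ideal_in_unit_combination:
  assumes P: "maximal_ideal_in P A" and A: "is_subring A" and c: "c \<in> A" "c \<notin> P"
  shows "\<exists>a\<in>A. \<exists>p\<in>P. p + c * a = 1"
proof -
  let ?J = "{x + c * a | x a. x \<in> P \<and> a \<in> A}"
  have "ideal_in ?J A"
    using ideal_in_add_principal[OF maximal_ideal_in_ideal[OF P] A c(1)] .
  moreover have "P \<subseteq> ?J" using subring_zero[OF A] by force
  moreover have "c \<in> ?J" using subring_one[OF A] ideal_in_zero[OF maximal_ideal_in_ideal[OF P]]
    by force
  ultimately have "?J = A" using P c(2) unfolding maximal_ideal_in_def by blast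
  then have "1 \<in> ?J" using subring_one[OF A] by simp
  then obtain p a where "1 = p + c * a" "p \<in> P" "a \<in> A" by blast
  then show ?thesis by (intro bexI[of _ a] bexI[of _ p]) simp_all
qed

lemma maximal_ideal_in_mult_in:
  assumes P: "maximal_ideal_in P A" and A: "is_subring A" and a: "a \<in> A" "a \<notin> P"
    and b: "b \<in> A" and ab: "a * b \<in> P"
  shows "b \<in> P"
proof -
  have I: "ideal_in P A" using maximal_ideal_in_ideal[OF P] .
  obtain r p where "r \<in> A" "p \<in> P" "p + a * r = 1"
    using maximal_ideal_in_unit_combination[OF P A a] by blast
  then have "b = (p + a * r) * b" by simp
  also have "\<dots> = p * b + (a * b) * r" by (simp add: algebra_simps)
  also have "\<dots> \<in> P"
    using ideal_in_add[OF I ideal_in_mult_right[OF I b \<open>p \<in> P\<close>]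
        ideal_in_mult_right[OF I \<open>r \<in> A\<close> ab]] .
  finally show ?thesis .
qed

lemma maximal_ideal_in_power_notin:
  assumes P: "maximal_ideal_in P A" and A: "is_subring A" and a: "a \<in> A" "a \<notin> P"
  shows "a ^ n \<notin> P"
proof (induction n)
  case 0
  then show ?case using maximal_ideal_in_one_notin[OF P] by simp
next
  case (Suc n)
  then show ?case using maximal_ideal_in_mult_in[OF P A a subring_power[OF A a(1)]] by auto
qed

lemma conductor_subset: "1 \<in> A \<Longrightarrow> conductor S A \<subseteq> S"
  unfolding conductor_def by force

lemma ideal_in_conductor:
  assumes S: "is_subring S" and A: "is_subring A"
  shows "ideal_in (conductor S A) A"
  unfolding ideal_in_def
proof (intro conjI ballI)
  show "conductor S A \<subseteq> A" unfolding conductor_def by blast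
  show "0 \<in> conductor S A"
    unfolding conductor_def using subring_zero[OF S] subring_zero[OF A] by simp
next
  fix x y assume "x \<in> conductor S A" "y \<in> conductor S A"
  then show "x + y \<in> conductor S A"
    unfolding conductor_def using subring_add[OF S] subring_add[OF A] by (simp add: distrib_left)
next
  fix b x assume b: "b \<in> A" and x: "x \<in> conductor S A"
  have "a * (b * x) \<in> S" if "a \<in> A" for a
    using x subring_mult[OF A that b] unfolding conductor_def by (simp add: mult.assoc[symmetric])
  then show "b * x \<in> conductor S A"
    using x subring_mult[OF A b] unfolding conductor_def by simp
qed

lemma integral_over_mono: "S \<subseteq> S' \<Longrightarrow> integral_over S x \<Longrightarrow> integral_over S' x"
  unfolding integral_over_def by blast

lemma integral_extension_subrings:
  assumes "integral_extension R T"
  shows "is_subring R" "is_subring T" "R \<subseteq> T" "\<And>x. x \<in> T \<Longrightarrow> integral_over R x"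
  using assms unfolding integral_extension_def by auto

lemma exists_maximal_ideal_contracting_into:
  assumes T: "is_subring T" and P: "0 \<in> P"
  obtains Q where "ideal_in Q T" "Q \<inter> R \<subseteq> P"
    "\<And>J. ideal_in J T \<Longrightarrow> Q \<subseteq> J \<Longrightarrow> J \<inter> R \<subseteq> P \<Longrightarrow> J = Q"
proof -
  let ?F = "{J. ideal_in J T \<and> J \<inter> R \<subseteq> P}"
  have "{0} \<in> ?F" unfolding ideal_in_def using subring_zero[OF T] P by auto
  then have nonempty: "?F \<noteq> {}" by blast
  have chain: "\<Union>C \<in> ?F" if "C \<noteq> {}" "subset.chain ?F C" for C
  proof -
    have "subset.chain {J. ideal_in J T} C" using that(2) unfolding subset_chain_def by blast
    then have "ideal_in (\<Union>C) T" using ideal_in_Union_chain[OF that(1)] by blast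
    moreover have "\<Union>C \<inter> R \<subseteq> P" using that(2) unfolding subset_chain_def by blast
    ultimately show ?thesis by blast
  qed
  obtain Q where QF: "Q \<in> ?F" and Qmax: "\<forall>J\<in>?F. Q \<subseteq> J \<longrightarrow> J = Q"
    using subset_Zorn_nonempty[OF nonempty chain] by blast
  show ?thesis
  proof (rule that)
    show "ideal_in Q T" "Q \<inter> R \<subseteq> P" using QF by simp_all
    show "J = Q" if "ideal_in J T" "Q \<subseteq> J" "J \<inter> R \<subseteq> P" for J
      using Qmax that by blast
  qed
qed

text \<open>Multiplying an integral equation of \<open>t\<close> over \<open>R\<close> by \<open>p\<^sup>n\<close> gives a monic equation
  for \<open>p t\<close> whose lower coefficients lie in \<open>P\<close>; evaluated at \<open>s\<close> instead it yields an element
  of \<open>Q \<inter> R \<subseteq> P\<close>, hence \<open>s\<^sup>n \<in> P\<close>.\<close>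

lemma contraction_mem_maximal_ideal:
  assumes ext: "integral_extension R T" and P: "maximal_ideal_in P R"
    and Q: "ideal_in Q T" and QR: "Q \<inter> R \<subseteq> P"
    and p: "p \<in> P" and t: "t \<in> T" and sR: "s \<in> R" and s_cong: "s - p * t \<in> Q"
  shows "s \<in> P"
proof (rule ccontr)
  assume sP: "s \<notin> P"
  note R = integral_extension_subrings(1)[OF ext] and T = integral_extension_subrings(2)[OF ext]
    and RT = integral_extension_subrings(3)[OF ext]
  have IP: "ideal_in P R" using maximal_ideal_in_ideal[OF P] .
  have pR: "p \<in> R" using p ideal_in_subset[OF IP] by blast
  have sT: "s \<in> T" using sR RT by blast
  have pT: "p \<in> T" using pR RT by blast
  have ptT: "p * t \<in> T" using subring_mult[OF T pT t] .
  obtain n c where c: "\<forall>i<n. c i \<in> R" and eq: "t ^ n + (\<Sum>i<n. c i * t ^ i) = 0"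
    using integral_extension_subrings(4)[OF ext t] unfolding integral_over_def by blast
  define E where "E = s ^ n + (\<Sum>i<n. c i * p ^ (n - i) * s ^ i)"
  have "(p * t) ^ n + (\<Sum>i<n. c i * p ^ (n - i) * (p * t) ^ i)
      = p ^ n * (t ^ n + (\<Sum>i<n. c i * t ^ i))"
  proof -
    have "c i * p ^ (n - i) * (p * t) ^ i = p ^ n * (c i * t ^ i)" if "i < n" for i
    proof -
      have "p ^ n = p ^ (n - i) * p ^ i" using that by (simp flip: power_add)
      then show ?thesis by (simp add: power_mult_distrib algebra_simps)
    qed
    then show ?thesis by (simp add: power_mult_distrib sum_distrib_left distrib_left)
  qed
  with eq have scaled_eq: "(p * t) ^ n + (\<Sum>i<n. c i * p ^ (n - i) * (p * t) ^ i) = 0" by simp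
  have "E = E - ((p * t) ^ n + (\<Sum>i<n. c i * p ^ (n - i) * (p * t) ^ i))"
    using scaled_eq by simp
  also have "\<dots> = (s ^ n - (p * t) ^ n) + (\<Sum>i<n. (c i * p ^ (n - i)) * (s ^ i - (p * t) ^ i))"
    unfolding E_def by (simp add: right_diff_distrib sum_subtractf)
  also have "\<dots> \<in> Q"
  proof -
    have diff: "s ^ k - (p * t) ^ k \<in> Q" for k using power_diff_in_ideal[OF Q T sT ptT s_cong] .
    have "c i * p ^ (n - i) \<in> T" if "i < n" for i
      using that c pT RT by (auto intro!: subring_mult[OF T] subring_power[OF T])
    then show ?thesis
      by (auto intro!: ideal_in_add[OF Q] ideal_in_sum[OF Q] ideal_in_mult_left[OF Q] diff)
  qed
  finally have "E \<in> Q" .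
  moreover have "E \<in> R"
    unfolding E_def using sR pR c
    by (auto intro!: subring_add[OF R] subring_power[OF R] subring_sum[OF R] subring_mult[OF R])
  ultimately have EP: "E \<in> P" using QR by blast
  have "c i * p ^ (n - i) * s ^ i \<in> P" if "i \<in> {..<n}" for i
  proof -
    have "n - i = Suc (n - Suc i)" using that by simp
    then have "c i * p ^ (n - i) * s ^ i = (c i * p ^ (n - Suc i) * s ^ i) * p"
      by (simp add: algebra_simps)
    also have "\<dots> \<in> P"
      using that c pR sR
      by (intro ideal_in_mult_left[OF IP _ p])
        (auto intro!: subring_mult[OF R] subring_power[OF R])
    finally show ?thesis .
  qed
  then have "(\<Sum>i<n. c i * p ^ (n - i) * s ^ i) \<in> P" by (rule ideal_in_sum[OF IP])
  then have "E - (\<Sum>i<n. c i * p ^ (n - i) * s ^ i) \<in> P" using EP by (intro ideal_in_diff[OF IP R])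
  then have "s ^ n \<in> P" unfolding E_def by simp
  then show False using maximal_ideal_in_power_notin[OF P R sR sP] by blast
qed

lemma lying_over:
  assumes ext: "integral_extension R T" and P: "maximal_ideal_in P R"
  shows "\<exists>Q. maximal_ideal_in Q T \<and> Q \<inter> R = P"
proof -
  note R = integral_extension_subrings(1)[OF ext] and T = integral_extension_subrings(2)[OF ext]
    and RT = integral_extension_subrings(3)[OF ext]
  have IP: "ideal_in P R" using maximal_ideal_in_ideal[OF P] .
  obtain Q where Q: "ideal_in Q T" and QR: "Q \<inter> R \<subseteq> P"
    and Qmax: "\<And>J. ideal_in J T \<Longrightarrow> Q \<subseteq> J \<Longrightarrow> J \<inter> R \<subseteq> P \<Longrightarrow> J = Q"
    using exists_maximal_ideal_contracting_into[OF T ideal_in_zero[OF IP]] by blast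
  have PQ: "P \<subseteq> Q"
  proof
    fix p assume p: "p \<in> P"
    have pT: "p \<in> T" using p ideal_in_subset[OF IP] RT by blast
    let ?J = "{q + p * t | q t. q \<in> Q \<and> t \<in> T}"
    have "?J \<inter> R \<subseteq> P"
    proof
      fix s assume "s \<in> ?J \<inter> R"
      then obtain q t where "s = q + p * t" "q \<in> Q" "t \<in> T" "s \<in> R" by blast
      then show "s \<in> P" using contraction_mem_maximal_ideal[OF ext P Q QR p \<open>t \<in> T\<close> \<open>s \<in> R\<close>]
        by simp
    qed
    moreover have "Q \<subseteq> ?J" using subring_zero[OF T] by force
    ultimately have "?J = Q" using Qmax ideal_in_add_principal[OF Q T pT] by blast
    moreover have "p \<in> ?J" using subring_one[OF T] ideal_in_zero[OF Q] by force
    ultimately show "p \<in> Q" by blast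
  qed
  have "maximal_ideal_in Q T"
    unfolding maximal_ideal_in_def
  proof (intro conjI allI impI)
    show "ideal_in Q T" by (rule Q)
    show "Q \<noteq> T"
      using QR maximal_ideal_in_one_notin[OF P] subring_one[OF R] subring_one[OF T] by blast
  next
    fix J assume "ideal_in J T \<and> Q \<subseteq> J"
    then have J: "ideal_in J T" and QJ: "Q \<subseteq> J" by auto
    show "J = Q \<or> J = T"
    proof (cases "J \<inter> R \<subseteq> P")
      case True
      then show ?thesis using Qmax J QJ by blast
    next
      case False
      then obtain r where r: "r \<in> J" "r \<in> R" "r \<notin> P" by blast
      then obtain a p where "a \<in> R" "p \<in> P" "p + r * a = 1"
        using maximal_ideal_in_unit_combination[OF P R] by blast
      moreover have "r * a \<in> J" using ideal_in_mult_right[OF J _ r(1)] \<open>a \<in> R\<close> RT by blast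
      ultimately have "1 \<in> J" using ideal_in_add[OF J] PQ QJ by (metis subsetD)
      then show ?thesis using ideal_in_eq_if_one[OF J] by blast
    qed
  qed
  moreover have "Q \<inter> R = P" using PQ QR ideal_in_subset[OF IP] by blast
  ultimately show ?thesis by blast
qed

lemma maximal_subring_subring: "maximal_subring V T \<Longrightarrow> is_subring V"
  unfolding maximal_subring_def by blast

lemma maximal_subring_psubset: "maximal_subring V T \<Longrightarrow> V \<subset> T"
  unfolding maximal_subring_def by blast

lemma maximal_subring_eqI:
  assumes "maximal_subring V T" "is_subring G" "V \<subseteq> G" "G \<subseteq> T" "x \<in> G" "x \<notin> V"
  shows "G = T"
  using assms unfolding maximal_subring_def by blast

text \<open>With \<open>D m = V\<close> the subring below consists of the elements that some power of \<open>y\<close>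
  multiplies into \<open>V\<close>; with \<open>D m\<close> the values at \<open>y\<close> of polynomials of degree at most \<open>m\<close>
  over \<open>V\<close> it is \<open>T \<inter> V[1/y]\<close>.\<close>

lemma is_subring_graded_quotients:
  assumes T: "is_subring T"
    and add: "\<And>m a b. a \<in> D m \<Longrightarrow> b \<in> D m \<Longrightarrow> a + b \<in> D m"
    and mult: "\<And>m k a b. a \<in> D m \<Longrightarrow> b \<in> D k \<Longrightarrow> a * b \<in> D (m + k)"
    and minus_one: "- 1 \<in> D 0"
    and powers: "\<And>k. y ^ k \<in> D k"
  shows "is_subring {z \<in> T. \<exists>m. z * y ^ m \<in> D m}"
  unfolding is_subring_def
proof (intro conjI ballI)
  show "1 \<in> {z \<in> T. \<exists>m. z * y ^ m \<in> D m}"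
    using subring_one[OF T] powers[of 0] by (auto intro!: exI[of _ 0])
next
  fix a b assume "a \<in> {z \<in> T. \<exists>m. z * y ^ m \<in> D m}" "b \<in> {z \<in> T. \<exists>m. z * y ^ m \<in> D m}"
  then obtain m k where a: "a \<in> T" "a * y ^ m \<in> D m" and b: "b \<in> T" "b * y ^ k \<in> D k"
    by blast
  have "(a + b) * y ^ (m + k) = (a * y ^ m) * y ^ k + (b * y ^ k) * y ^ m"
    by (simp add: algebra_simps power_add)
  also have "\<dots> \<in> D (m + k)"
    using add[OF mult[OF a(2) powers[of k]] mult[OF b(2) powers[of m], folded add.commute[of m k]]] .
  finally have "(a + b) * y ^ (m + k) \<in> D (m + k)" .
  moreover have "(a * b) * y ^ (m + k) = (a * y ^ m) * (b * y ^ k)"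
    by (simp add: algebra_simps power_add)
  then have "(a * b) * y ^ (m + k) \<in> D (m + k)"
    using mult[OF a(2) b(2)] by simp
  ultimately show "a + b \<in> {z \<in> T. \<exists>m. z * y ^ m \<in> D m}" "a * b \<in> {z \<in> T. \<exists>m. z * y ^ m \<in> D m}"
    using a(1) b(1) subring_add[OF T] subring_mult[OF T] by blast+
next
  fix a assume "a \<in> {z \<in> T. \<exists>m. z * y ^ m \<in> D m}"
  then obtain m where a: "a \<in> T" "a * y ^ m \<in> D m" by blast
  have "(- a) * y ^ m = (- 1) * (a * y ^ m)" by simp
  also have "\<dots> \<in> D m" using mult[OF minus_one a(2)] by simp
  finally show "- a \<in> {z \<in> T. \<exists>m. z * y ^ m \<in> D m}" using a subring_uminus[OF T] by auto
qed

definition poly_values_deg_le :: "'a::comm_ring_1 set \<Rightarrow> 'a \<Rightarrow> nat \<Rightarrow> 'a set" where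
  "poly_values_deg_le V y m = {poly p y | p. (\<forall>i. coeff p i \<in> V) \<and> degree p \<le> m}"

lemma poly_values_deg_le_add:
  assumes V: "is_subring V"
    and "a \<in> poly_values_deg_le V y m" "b \<in> poly_values_deg_le V y m"
  shows "a + b \<in> poly_values_deg_le V y m"
proof -
  obtain p q where p: "\<forall>i. coeff p i \<in> V" "degree p \<le> m" "a = poly p y"
    and q: "\<forall>i. coeff q i \<in> V" "degree q \<le> m" "b = poly q y"
    using assms(2,3) unfolding poly_values_deg_le_def by blast
  have "\<forall>i. coeff (p + q) i \<in> V" using p q subring_add[OF V] by simp
  moreover have "degree (p + q) \<le> m" using p q by (simp add: degree_add_le)
  moreover have "a + b = poly (p + q) y" using p q by simp
  ultimately show ?thesis unfolding poly_values_deg_le_def by blast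
qed

lemma poly_values_deg_le_mult:
  assumes V: "is_subring V"
    and "a \<in> poly_values_deg_le V y m" "b \<in> poly_values_deg_le V y k"
  shows "a * b \<in> poly_values_deg_le V y (m + k)"
proof -
  obtain p q where p: "\<forall>i. coeff p i \<in> V" "degree p \<le> m" "a = poly p y"
    and q: "\<forall>i. coeff q i \<in> V" "degree q \<le> k" "b = poly q y"
    using assms(2,3) unfolding poly_values_deg_le_def by blast
  have "\<forall>i. coeff (p * q) i \<in> V"
    using p q by (auto simp: coeff_mult intro!: subring_sum[OF V] subring_mult[OF V])
  moreover have "degree (p * q) \<le> m + k"
    using p q by (meson add_mono degree_mult_le order_trans)
  moreover have "a * b = poly (p * q) y" using p q by simp
  ultimately show ?thesis unfolding poly_values_deg_le_def by blast
qed

lemma poly_values_deg_le_const: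
  assumes V: "is_subring V" and v: "v \<in> V"
  shows "v \<in> poly_values_deg_le V y m"
proof -
  have "\<forall>i. coeff [:v:] i \<in> V" using v subring_zero[OF V] by (simp add: coeff_pCons split: nat.split)
  then show ?thesis unfolding poly_values_deg_le_def by (intro CollectI exI[of _ "[:v:]"]) simp
qed

lemma power_in_poly_values_deg_le:
  assumes V: "is_subring V"
  shows "y ^ k \<in> poly_values_deg_le V y k"
proof -
  have "\<forall>i. coeff (monom 1 k) i \<in> V" using subring_zero[OF V] subring_one[OF V] by (simp add: coeff_monom)
  then show ?thesis unfolding poly_values_deg_le_def
    by (intro CollectI exI[of _ "monom 1 k"]) (simp add: poly_monom degree_monom_le)
qed

lemma integral_over_if_power_in_poly_values_deg_le:
  assumes V: "is_subring V" and y: "y ^ Suc m \<in> poly_values_deg_le V y m"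
  shows "integral_over V y"
proof -
  obtain p where p: "\<forall>i. coeff p i \<in> V" "degree p \<le> m" "y ^ Suc m = poly p y"
    using y unfolding poly_values_deg_le_def by blast
  have "poly p y = poly (\<Sum>i\<le>m. monom (coeff p i) i) y"
    using poly_as_sum_of_monoms'[OF p(2)] by simp
  also have "\<dots> = (\<Sum>i<Suc m. coeff p i * y ^ i)"
    by (simp add: poly_sum poly_monom lessThan_Suc_atMost)
  finally have "y ^ Suc m + (\<Sum>i<Suc m. - coeff p i * y ^ i) = 0"
    using p(3) by (simp add: sum_negf)
  then show ?thesis
    unfolding integral_over_def using p(1) subring_uminus[OF V]
    by (intro exI[of _ "Suc m"] exI[of _ "\<lambda>i. - coeff p i"]) simp
qed

lemma integrally_closed_maximal_subring_cancel:
  assumes mx: "maximal_subring V T" and ic: "integrally_closed_in V T" and T: "is_subring T"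
    and x: "x \<in> T" "x \<notin> V" and y: "y \<in> T" and xy: "x * y \<in> V"
  shows "y \<in> V"
proof -
  have V: "is_subring V" and VT: "V \<subseteq> T"
    using maximal_subring_subring[OF mx] maximal_subring_psubset[OF mx] by auto
  let ?G = "{z \<in> T. \<exists>m. z * y ^ m \<in> poly_values_deg_le V y m}"
  have "is_subring ?G"
    using poly_values_deg_le_add[OF V] poly_values_deg_le_mult[OF V]
      poly_values_deg_le_const[OF V subring_uminus[OF V subring_one[OF V]]]
      power_in_poly_values_deg_le[OF V]
    by (intro is_subring_graded_quotients[OF T])
  moreover have "V \<subseteq> ?G"
    using VT poly_values_deg_le_const[OF V] by (auto intro!: exI[of _ 0])
  moreover have "x \<in> ?G"
    using x xy poly_values_deg_le_const[OF V xy] by (auto intro!: exI[of _ 1])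
  ultimately have "?G = T" using maximal_subring_eqI[OF mx] x by blast
  then obtain m where "y ^ Suc m \<in> poly_values_deg_le V y m" using y by auto
  then have "integral_over V y" by (rule integral_over_if_power_in_poly_values_deg_le[OF V])
  then show ?thesis using ic y unfolding integrally_closed_in_def by blast
qed

lemma maximal_subring_power_multiplier:
  assumes mx: "maximal_subring V T" and T: "is_subring T"
    and u: "u \<in> V" and s: "s \<in> T" "s \<notin> V" and su: "s * u \<in> V" and r: "r \<in> T"
  shows "\<exists>m. r * u ^ m \<in> V"
proof -
  have V: "is_subring V" and VT: "V \<subseteq> T"
    using maximal_subring_subring[OF mx] maximal_subring_psubset[OF mx] by auto
  let ?G = "{z \<in> T. \<exists>m. z * u ^ m \<in> V}"
  have "is_subring ?G"
    using subring_add[OF V] subring_mult[OF V] subring_uminus[OF V subring_one[OF V]]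
      subring_power[OF V u]
    by (intro is_subring_graded_quotients[OF T])
  moreover have "V \<subseteq> ?G" using VT by (auto intro!: exI[of _ 0])
  moreover have "s \<in> ?G" using s su by (auto intro!: exI[of _ 1])
  ultimately have "?G = T" using maximal_subring_eqI[OF mx] s by blast
  then show ?thesis using r by blast
qed

lemma not_subset_integrally_closed:
  assumes ext: "integral_extension R T" and ic: "integrally_closed_in V T" and VT: "V \<subset> T"
  shows "\<not> R \<subseteq> V"
proof
  assume "R \<subseteq> V"
  then have "T \<subseteq> V"
    using integral_extension_subrings(4)[OF ext] integral_over_mono ic
    unfolding integrally_closed_in_def by blast
  then show False using VT by blast
qed

lemma integrally_closed_in_Int:
  assumes "integrally_closed_in V T" "R \<subseteq> T"
  shows "integrally_closed_in (V \<inter> R) R"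
  using assms integral_over_mono[of "V \<inter> R" V] unfolding integrally_closed_in_def by blast

lemma conductor_eq_maximal_ideal:
  assumes A: "is_subring A" and W: "is_subring W" "W \<subset> A"
    and P: "maximal_ideal_in P A" and PW: "P \<subseteq> W"
  shows "conductor W A = P"
proof -
  have IP: "ideal_in P A" using maximal_ideal_in_ideal[OF P] .
  have "P \<subseteq> conductor W A"
    unfolding conductor_def using PW ideal_in_subset[OF IP] ideal_in_mult_left[OF IP] by blast
  moreover have "conductor W A \<noteq> A"
    using conductor_subset[OF subring_one[OF A]] W(2) by blast
  ultimately show ?thesis
    using P ideal_in_conductor[OF W(1) A] unfolding maximal_ideal_in_def by blast
qed

lemma maximal_subring_Int:
  assumes ext: "integral_extension R T" and mx: "maximal_subring V T"
    and ic: "integrally_closed_in V T" and P: "maximal_ideal_in P R" and PV: "P \<subseteq> V"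
  shows "maximal_subring (V \<inter> R) R"
proof -
  note R = integral_extension_subrings(1)[OF ext] and T = integral_extension_subrings(2)[OF ext]
    and RT = integral_extension_subrings(3)[OF ext]
  have IP: "ideal_in P R" using maximal_ideal_in_ideal[OF P] .
  have V: "is_subring V" using maximal_subring_subring[OF mx] .
  have proper: "V \<inter> R \<subset> R"
    using not_subset_integrally_closed[OF ext ic maximal_subring_psubset[OF mx]] by blast
  have "S = V \<inter> R" if S: "is_subring S" and WS: "V \<inter> R \<subseteq> S" and SR: "S \<subset> R" for S
  proof (rule ccontr)
    assume "S \<noteq> V \<inter> R"
    then obtain s where sS: "s \<in> S" and sR: "s \<in> R" and sV: "s \<notin> V" using WS SR by blast
    have sT: "s \<in> T" using sR RT by blast
    obtain u p where uR: "u \<in> R" and pP: "p \<in> P" and unit: "p + s * u = 1"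
      using maximal_ideal_in_unit_combination[OF P R sR] sV PV by blast
    have "s * u = 1 - p" using unit by (simp add: algebra_simps)
    then have suV: "s * u \<in> V" using pP PV subring_diff[OF V subring_one[OF V]] by auto
    have uV: "u \<in> V"
      using integrally_closed_maximal_subring_cancel[OF mx ic T sT sV _ suV] uR RT by blast
    have "r \<in> S" if rR: "r \<in> R" for r
    proof -
      obtain m where "r * u ^ m \<in> V"
        using maximal_subring_power_multiplier[OF mx T uV sT sV suV] rR RT by blast
      then have ruS: "r * u ^ m \<in> S"
        using WS rR uR subring_mult[OF R] subring_power[OF R] by blast
      have "1 - s * u \<in> P" using unit pP by (metis add_diff_cancel_right')
      then have "1 ^ m - (s * u) ^ m \<in> P"
        using power_diff_in_ideal[OF IP R subring_one[OF R] subring_mult[OF R sR uR]] by blast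
      then have "r * (1 ^ m - (s * u) ^ m) \<in> S"
        using ideal_in_mult_left[OF IP rR] PV WS ideal_in_subset[OF IP] by blast
      moreover have "r = (r * u ^ m) * s ^ m + r * (1 ^ m - (s * u) ^ m)"
        by (simp add: algebra_simps power_mult_distrib)
      ultimately show "r \<in> S"
        using subring_add[OF S subring_mult[OF S ruS subring_power[OF S sS]]] by metis
    qed
    then show False using SR by blast
  qed
  then show ?thesis
    unfolding maximal_subring_def using subring_Int[OF V R] proper by blast
qed

theorem theorem3p8:
  fixes R T :: "'a::comm_ring_1 set"
  assumes "integral_extension R T"
    and "\<forall>Q. maximal_ideal_in Q T \<longrightarrow>
           (\<exists>V. maximal_subring V T \<and> integrally_closed_in V T \<and> conductor V T = Q)"
  shows "\<forall>P. maximal_ideal_in P R \<longrightarrow>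
           (\<exists>W. maximal_subring W R \<and> integrally_closed_in W R \<and> conductor W R = P)"
proof (intro allI impI)
  fix P assume P: "maximal_ideal_in P R"
  note R = integral_extension_subrings(1)[OF assms(1)]
    and T = integral_extension_subrings(2)[OF assms(1)]
    and RT = integral_extension_subrings(3)[OF assms(1)]
  obtain Q where Q: "maximal_ideal_in Q T" and QR: "Q \<inter> R = P"
    using lying_over[OF assms(1) P] by blast
  obtain V where mx: "maximal_subring V T" and ic: "integrally_closed_in V T"
    and conductor: "conductor V T = Q"
    using assms(2) Q by blast
  have PV: "P \<subseteq> V" using QR conductor conductor_subset[OF subring_one[OF T]] by blast
  have W: "maximal_subring (V \<inter> R) R" using maximal_subring_Int[OF assms(1) mx ic P PV] .
  moreover have "integrally_closed_in (V \<inter> R) R" using integrally_closed_in_Int[OF ic RT] .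
  moreover have "conductor (V \<inter> R) R = P"
    using conductor_eq_maximal_ideal[OF R maximal_subring_subring[OF W]
        maximal_subring_psubset[OF W] P] PV ideal_in_subset[OF maximal_ideal_in_ideal[OF P]]
    by blast
  ultimately show "\<exists>W. maximal_subring W R \<and> integrally_closed_in W R \<and> conductor W R = P"
    by blast
qed

end
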